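(* For every $\delta>0$ and $n\in\mathbb{N}$ there exists $N\in\mathbb{N}$ such that the following holds for every $N$-partitioned hypergraph $H$ and every choice of subsets $A_{ijk}\subseteq V_{ij}$, for $i<j<k$, $i,j,k\in[N]$, with $|A_{ijk}|\ge\delta|V_{ij}|$: there exist an induced $n$-partitioned subhypergraph $H'$ of $H$ with index set $I\subseteq[N]$ and vertices $\alpha_{ij}\in V_{ij}$, $i<j$, $i,j\in I$, such that $\alpha_{ij}\in A_{ijk}$ for all $k\in I$ with $k>j$.
   Context: An $n$-partitioned hypergraph $H$ is a finite $3$-uniform hypergraph whose vertex set is partitioned into nonempty sets $V_{ij}$, $1\le i<j\le n$, such that every edge has, for some $1\le i<j<k\le n$, exactly one vertex in each of $V_{ij}$, $V_{ik}$, $V_{jk}$. For $I\subseteq[n]$, the induced subhypergraph with index set $I$ is the $|I|$-partitioned hypergraph with parts $V_{ij}$, $i<j$, $i,j\in I$ (indexed by elements of $I$) and all edges of $H$ contained in the union of these parts. *)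

theory Defs
  imports Complex_Main
begin

text \<open>An N-partitioned 3-uniform hypergraph on vertices of type nat.
  V i j is the part V_ij (only meaningful for 1 <= i < j <= N), E is the set of
  edges (each edge a 3-element vertex set).\<close>

definition partitioned_hypergraph ::
  "nat \<Rightarrow> (nat \<Rightarrow> nat \<Rightarrow> nat set) \<Rightarrow> nat set set \<Rightarrow> bool" where
  "partitioned_hypergraph N V E \<longleftrightarrow>
     (\<forall>i j. 1 \<le> i \<and> i < j \<and> j \<le> N \<longrightarrow> finite (V i j) \<and> V i j \<noteq> {}) \<and>
     (\<forall>i j i' j'. 1 \<le> i \<and> i < j \<and> j \<le> N \<and> 1 \<le> i' \<and> i' < j' \<and> j' \<le> N
        \<and> (i, j) \<noteq> (i', j') \<longrightarrow> V i j \<inter> V i' j' = {}) \<and>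
     finite E \<and>
     (\<forall>e\<in>E. \<exists>i j k x y z. 1 \<le> i \<and> i < j \<and> j < k \<and> k \<le> N \<and>
        x \<in> V i j \<and> y \<in> V i k \<and> z \<in> V j k \<and> e = {x, y, z})"

definition induced_edges ::
  "nat set \<Rightarrow> (nat \<Rightarrow> nat \<Rightarrow> nat set) \<Rightarrow> nat set set \<Rightarrow> nat set set" where
  "induced_edges I V E = {e \<in> E. e \<subseteq> (\<Union>i\<in>I. \<Union>j\<in>I. if i < j then V i j else {})}"

end

theory Submission
  imports Defs
begin

text \<open>The indices are chosen greedily from left to right, keeping a pool of candidate later
  indices. When the least candidate \<open>j\<close> is added, every earlier index \<open>i\<close> needs a vertex
  of \<open>V i j\<close> lying in \<open>A i j k\<close> for all remaining candidates \<open>k\<close>. Double counting gives a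
  vertex lying in \<open>A i j k\<close> for a \<open>\<delta>\<close>-fraction of the pool; doing this for the earlier
  indices one after another keeps a \<open>\<delta>\<^sup>n\<close>-fraction of the pool. Hence a pool of size
  \<open>n / \<delta>^(n^2)\<close> suffices for \<open>n\<close> steps.\<close>

lemma popular_element_exists:
  fixes \<delta> :: real
  assumes "finite V" "V \<noteq> {}" "finite S"
    and dense: "\<And>k. k \<in> S \<Longrightarrow> A k \<subseteq> V \<and> \<delta> * card V \<le> card (A k)"
  shows "\<exists>x\<in>V. \<delta> * card S \<le> card {k\<in>S. x \<in> A k}"
proof (rule ccontr)
  assume "\<not> ?thesis"
  then have "(\<Sum>x\<in>V. real (card {k\<in>S. x \<in> A k})) < (\<Sum>x\<in>V. \<delta> * card S)"
    using assms(1,2) by (intro sum_strict_mono) auto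
  also have "\<dots> = (\<Sum>k\<in>S. \<delta> * card V)"
    by simp
  also have "\<dots> \<le> (\<Sum>k\<in>S. real (card (A k)))"
    using dense by (intro sum_mono) auto
  also have "\<dots> = (\<Sum>x\<in>V. real (card {k\<in>S. x \<in> A k}))"
  proof -
    have "(\<Sum>x\<in>V. card {k\<in>S. x \<in> A k}) = (\<Sum>k\<in>S. card (A k))"
    proof (rule sum_multicount_gen)
      show "\<forall>k\<in>S. card {x\<in>V. x \<in> A k} = card (A k)"
      proof
        fix k
        assume "k \<in> S"
        then have "{x\<in>V. x \<in> A k} = A k"
          using dense by blast
        then show "card {x\<in>V. x \<in> A k} = card (A k)"
          by simp
      qed
    qed (use assms in auto)
    then show ?thesis
      by (simp only: flip: of_nat_sum)
  qed
  finally show False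
    by simp
qed

lemma simultaneous_popular_elements:
  fixes \<delta> :: real
  assumes "0 \<le> \<delta>" "finite J" "finite S"
    and parts: "\<And>i. i \<in> J \<Longrightarrow> finite (W i) \<and> W i \<noteq> {}"
    and dense: "\<And>i k. i \<in> J \<Longrightarrow> k \<in> S \<Longrightarrow> B i k \<subseteq> W i \<and> \<delta> * card (W i) \<le> card (B i k)"
  shows "\<exists>\<beta> T. T \<subseteq> S \<and> \<delta> ^ card J * card S \<le> card T \<and>
           (\<forall>i\<in>J. \<beta> i \<in> W i \<and> (\<forall>k\<in>T. \<beta> i \<in> B i k))"
  using assms(2) parts dense
proof (induction J rule: finite_induct)
  case empty
  show ?case
    by auto
next
  case (insert i J)
  then obtain \<beta> T where T: "T \<subseteq> S" "\<delta> ^ card J * card S \<le> card T"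
    and \<beta>: "\<forall>i'\<in>J. \<beta> i' \<in> W i' \<and> (\<forall>k\<in>T. \<beta> i' \<in> B i' k)"
    by (metis insertCI)
  have "finite T"
    using T(1) \<open>finite S\<close> finite_subset by blast
  then obtain x where x: "x \<in> W i" "\<delta> * card T \<le> card {k\<in>T. x \<in> B i k}"
    using popular_element_exists[of "W i" T "B i" \<delta>] insert.prems T(1) by blast
  have "\<delta> ^ card (insert i J) * card S = \<delta> * (\<delta> ^ card J * card S)"
    using insert.hyps by simp
  also have "\<dots> \<le> \<delta> * card T"
    using T(2) \<open>0 \<le> \<delta>\<close> by (rule mult_left_mono)
  also have "\<dots> \<le> card {k\<in>T. x \<in> B i k}"
    using x(2) .
  finally show ?case
    using T(1) \<beta> x(1) insert.hyps
    by (intro exI[of _ "\<beta>(i := x)"] exI[of _ "{k\<in>T. x \<in> B i k}"]) auto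
qed

lemma pool_budget:
  fixes c s :: real
  assumes "0 < c" "c \<le> 1" "Suc m / c ^ Suc m \<le> s"
  shows "1 \<le> s" and "m / c ^ m \<le> c * (s - 1)"
proof -
  have inv_pow_ge_1: "1 \<le> 1 / c ^ k" for k
    using assms(1,2) by (simp add: power_le_one)
  have "1 \<le> 1 / c ^ Suc m"
    by (rule inv_pow_ge_1)
  also have "\<dots> \<le> Suc m / c ^ Suc m"
    using assms(1) by (intro divide_right_mono) auto
  also have "\<dots> \<le> s"
    by (rule assms(3))
  finally show "1 \<le> s" .
  have "m / c ^ m \<le> m / c ^ m + (1 / c ^ m - c)"
    using inv_pow_ge_1[of m] assms(2) by simp
  also have "\<dots> = c * (Suc m / c ^ Suc m - 1)"
    using assms(1) by (simp add: field_simps)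
  also have "\<dots> \<le> c * (s - 1)"
    using assms(1,3) by simp
  finally show "m / c ^ m \<le> c * (s - 1)" .
qed

definition compatible_choice ::
  "(nat \<Rightarrow> nat \<Rightarrow> 'a set) \<Rightarrow> (nat \<Rightarrow> nat \<Rightarrow> nat \<Rightarrow> 'a set) \<Rightarrow> (nat \<Rightarrow> nat \<Rightarrow> 'a) \<Rightarrow>
    nat set \<Rightarrow> nat set \<Rightarrow> bool" where
  "compatible_choice V A \<alpha> J K \<longleftrightarrow>
     (\<forall>i\<in>J. \<forall>j\<in>J. i < j \<longrightarrow> \<alpha> i j \<in> V i j \<and> (\<forall>k\<in>K. j < k \<longrightarrow> \<alpha> i j \<in> A i j k))"

lemma compatible_choice_subset:
  "compatible_choice V A \<alpha> J K \<Longrightarrow> K' \<subseteq> K \<Longrightarrow> compatible_choice V A \<alpha> J K'"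
  unfolding compatible_choice_def by blast

locale dense_system =
  fixes N :: nat and \<delta> :: real
    and V :: "nat \<Rightarrow> nat \<Rightarrow> 'a set" and A :: "nat \<Rightarrow> nat \<Rightarrow> nat \<Rightarrow> 'a set"
  assumes delta_pos: "0 < \<delta>" and delta_le_one: "\<delta> \<le> 1"
    and finite_part: "\<And>i j. 1 \<le> i \<Longrightarrow> i < j \<Longrightarrow> j \<le> N \<Longrightarrow> finite (V i j)"
    and part_nonempty: "\<And>i j. 1 \<le> i \<Longrightarrow> i < j \<Longrightarrow> j \<le> N \<Longrightarrow> V i j \<noteq> {}"
    and dense_subset: "\<And>i j k. 1 \<le> i \<Longrightarrow> i < j \<Longrightarrow> j < k \<Longrightarrow> k \<le> N \<Longrightarrow> A i j k \<subseteq> V i j"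
    and dense_card: "\<And>i j k. 1 \<le> i \<Longrightarrow> i < j \<Longrightarrow> j < k \<Longrightarrow> k \<le> N \<Longrightarrow>
      \<delta> * card (V i j) \<le> card (A i j k)"
begin

lemma greedy_step:
  assumes range: "J \<union> S \<subseteq> {1..N}" and below: "\<forall>j\<in>J. \<forall>k\<in>S. j < k" and "S \<noteq> {}"
    and \<alpha>: "compatible_choice V A \<alpha> J (J \<union> S)"
  obtains j T \<beta> where "j \<in> S" "T \<subseteq> S" "\<forall>k\<in>T. j < k"
    and "\<delta> ^ card J * (real (card S) - 1) \<le> card T"
    and "compatible_choice V A \<beta> (insert j J) (insert j J \<union> T)"
proof -
  define j where "j = Min S"
  have "finite J" "finite S"
    using range finite_subset by auto
  then have j: "j \<in> S" "\<forall>k\<in>S. j \<le> k"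
    using \<open>S \<noteq> {}\<close> by (auto simp: j_def)
  have J_below_j: "\<forall>i\<in>J. 1 \<le> i \<and> i < j"
    using range below j(1) by auto
  have later: "\<forall>k\<in>S - {j}. j < k \<and> k \<le> N"
    using range j(2) by fastforce
  obtain \<beta> T where T: "T \<subseteq> S - {j}" "\<delta> ^ card J * card (S - {j}) \<le> card T"
    and \<beta>: "\<forall>i\<in>J. \<beta> i \<in> V i j \<and> (\<forall>k\<in>T. \<beta> i \<in> A i j k)"
  proof -
    have "j \<le> N"
      using range j(1) by auto
    then have "\<exists>\<beta> T. T \<subseteq> S - {j} \<and> \<delta> ^ card J * card (S - {j}) \<le> card T \<and>
        (\<forall>i\<in>J. \<beta> i \<in> V i j \<and> (\<forall>k\<in>T. \<beta> i \<in> A i j k))"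
      using J_below_j later delta_pos \<open>finite J\<close> \<open>finite S\<close>
      by (intro simultaneous_popular_elements)
        (auto intro: finite_part dense_card simp: part_nonempty
          dest: dense_subset[THEN subsetD, rotated 4])
    then show ?thesis
      using that by blast
  qed
  have "compatible_choice V A (\<lambda>i. (\<alpha> i)(j := \<beta> i)) (insert j J) (insert j J \<union> T)"
    unfolding compatible_choice_def
  proof (intro ballI impI)
    fix i j'
    assume i: "i \<in> insert j J" and j': "j' \<in> insert j J" and "i < j'"
    show "((\<alpha> i)(j := \<beta> i)) j' \<in> V i j' \<and>
      (\<forall>k\<in>insert j J \<union> T. j' < k \<longrightarrow> ((\<alpha> i)(j := \<beta> i)) j' \<in> A i j' k)"
    proof (cases "j' = j")
      case True
      have "k \<in> T" if "k \<in> insert j J \<union> T" "j < k" for k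
        using that J_below_j by auto
      moreover have "i \<in> J"
        using i \<open>i < j'\<close> True by auto
      ultimately show ?thesis
        using True \<beta> by auto
    next
      case False
      then have "i \<in> J" "j' \<in> J"
        using i j' \<open>i < j'\<close> J_below_j by auto
      moreover have "insert j J \<union> T \<subseteq> J \<union> S"
        using j(1) T(1) by auto
      ultimately show ?thesis
        using False \<alpha> \<open>i < j'\<close> unfolding compatible_choice_def by auto
    qed
  qed
  moreover have "card (S - {j}) = real (card S) - 1"
  proof -
    have "Suc (card (S - {j})) = card S"
      using \<open>finite S\<close> j(1) by (rule card_Suc_Diff1)
    then show ?thesis
      by linarith
  qed
  ultimately show ?thesis
    using that[of j T] j(1) T later by auto
qed

lemma greedy_extension:
  assumes "J \<union> S \<subseteq> {1..N}" "\<forall>j\<in>J. \<forall>k\<in>S. j < k"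
    and "compatible_choice V A \<alpha> J (J \<union> S)"
    and "card J + m \<le> n" "m / (\<delta> ^ n) ^ m \<le> card S"
  shows "\<exists>I \<beta>. I \<subseteq> J \<union> S \<and> card I = card J + m \<and> compatible_choice V A \<beta> I I"
  using assms
proof (induction m arbitrary: J S \<alpha>)
  case 0
  then show ?case
    by (intro exI[of _ J] exI[of _ \<alpha>]) (auto intro: compatible_choice_subset)
next
  case (Suc m)
  define c where "c = \<delta> ^ n"
  have c: "0 < c" "c \<le> 1"
    using delta_pos delta_le_one by (auto simp: c_def power_le_one)
  have "finite J"
    using Suc.prems(1) finite_subset by auto
  have pool: "Suc m / c ^ Suc m \<le> card S"
    using Suc.prems(5) by (simp add: c_def)
  then have "1 \<le> real (card S)"
    by (rule pool_budget(1)[OF c])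
  then have "S \<noteq> {}"
    by auto
  obtain j T \<beta> where j: "j \<in> S" and T: "T \<subseteq> S" "\<forall>k\<in>T. j < k"
    and shrink: "\<delta> ^ card J * (real (card S) - 1) \<le> card T"
    and \<beta>: "compatible_choice V A \<beta> (insert j J) (insert j J \<union> T)"
    using Suc.prems(1,2) \<open>S \<noteq> {}\<close> Suc.prems(3) by (rule greedy_step)
  have "m / c ^ m \<le> c * (real (card S) - 1)"
    using pool by (rule pool_budget(2)[OF c])
  also have "\<dots> \<le> \<delta> ^ card J * (real (card S) - 1)"
    using Suc.prems(4) \<open>1 \<le> real (card S)\<close> delta_pos delta_le_one
    by (intro mult_right_mono) (auto simp: c_def intro: power_decreasing)
  also have "\<dots> \<le> card T"
    by (rule shrink)
  finally have "m / c ^ m \<le> card T" .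
  moreover have "j \<notin> J"
    using Suc.prems(2) j by blast
  ultimately have "\<exists>I \<beta>'. I \<subseteq> insert j J \<union> T \<and> card I = card (insert j J) + m \<and>
      compatible_choice V A \<beta>' I I"
  proof (intro Suc.IH)
    show "insert j J \<union> T \<subseteq> {1..N}"
      using Suc.prems(1) j T(1) by auto
    show "\<forall>j'\<in>insert j J. \<forall>k\<in>T. j' < k"
      using Suc.prems(2) T by auto
    show "card (insert j J) + m \<le> n"
      using Suc.prems(4) \<open>j \<notin> J\<close> \<open>finite J\<close> by simp
  qed (use \<beta> in \<open>simp_all add: c_def\<close>)
  then show ?case
    using j T(1) \<open>j \<notin> J\<close> \<open>finite J\<close> by auto
qed

end

theorem lemma4p4:
  fixes \<delta> :: real and n :: nat
  assumes "\<delta> > 0"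
  shows "\<exists>N::nat. \<forall>(V :: nat \<Rightarrow> nat \<Rightarrow> nat set) (E :: nat set set)
            (A :: nat \<Rightarrow> nat \<Rightarrow> nat \<Rightarrow> nat set).
    partitioned_hypergraph N V E \<longrightarrow>
    (\<forall>i j k. 1 \<le> i \<and> i < j \<and> j < k \<and> k \<le> N \<longrightarrow>
        A i j k \<subseteq> V i j \<and> real (card (A i j k)) \<ge> \<delta> * real (card (V i j))) \<longrightarrow>
    (\<exists>I \<alpha>. I \<subseteq> {1..N} \<and> card I = n \<and>
       (\<forall>i\<in>I. \<forall>j\<in>I. i < j \<longrightarrow>
          \<alpha> i j \<in> V i j \<and> (\<forall>k\<in>I. j < k \<longrightarrow> \<alpha> i j \<in> A i j k)))"
proof -
  define \<epsilon> where "\<epsilon> = min \<delta> 1"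
  define N where "N = nat \<lceil>n / (\<epsilon> ^ n) ^ n\<rceil>"
  have "partitioned_hypergraph N V E \<longrightarrow>
    (\<forall>i j k. 1 \<le> i \<and> i < j \<and> j < k \<and> k \<le> N \<longrightarrow>
        A i j k \<subseteq> V i j \<and> real (card (A i j k)) \<ge> \<delta> * real (card (V i j))) \<longrightarrow>
    (\<exists>I \<alpha>. I \<subseteq> {1..N} \<and> card I = n \<and> compatible_choice V A \<alpha> I I)" for V E A
  proof (intro impI)
    assume "partitioned_hypergraph N V E"
      and "\<forall>i j k. 1 \<le> i \<and> i < j \<and> j < k \<and> k \<le> N \<longrightarrow>
        A i j k \<subseteq> V i j \<and> real (card (A i j k)) \<ge> \<delta> * real (card (V i j))"
    then interpret dense_system N \<epsilon> V A
      using assms unfolding partitioned_hypergraph_def \<epsilon>_def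
      by unfold_locales (auto intro: order_trans[OF mult_right_mono[OF min.cobounded1]])
    have "n / (\<epsilon> ^ n) ^ n \<le> card {1..N}"
      unfolding N_def by (simp add: real_nat_ceiling_ge)
    then show "\<exists>I \<alpha>. I \<subseteq> {1..N} \<and> card I = n \<and> compatible_choice V A \<alpha> I I"
      using greedy_extension[of "{}" "{1..N}" "\<lambda>_ _. undefined" n n]
      by (simp add: compatible_choice_def)
  qed
  then show ?thesis
    unfolding compatible_choice_def by blast
qed

end
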